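(* Let the joint distribution of observable random variables $(Y,D)$ on $\mathbb R\times\{0,1\}$ be given, and let $\nu$ be a probability distribution on $\mathbb R^2$. For a Borel set $A\subseteq\mathbb R^2$ define $U_{A,1}=\{y\in\mathbb R: ((-\infty,y]\times\{y\})\cap A\neq\varnothing\}$, $U_{A,0}=\{y\in\mathbb R:(\{y\}\times(-\infty,y])\cap A\neq\varnothing\}$, $L_{A,1}=\{y\in\mathbb R:(-\infty,y]\times\{y\}\subseteq A\}$, $L_{A,0}=\{y\in\mathbb R:\{y\}\times(-\infty,y]\subseteq A\}$. Then $\nu$ satisfies, for every Borel $A\subseteq\mathbb R^2$, $$\mathbb P(Y\in L_{A,0},D=0)+\mathbb P(Y\in L_{A,1},D=1)\le \nu(A)\le \mathbb P(Y\in U_{A,0},D=0)+\mathbb P(Y\in U_{A,1},D=1)$$ if and only if there exist, on some probability space, random variables $(\tilde Y,\tilde D,Y_0,Y_1)$ with $(\tilde Y,\tilde D)$ distributed as $(Y,D)$ and $(Y_0,Y_1)$ distributed as $\nu$ such that $\tilde Y=Y_1\tilde D+Y_0(1-\tilde D)$ and almost surely $Y_1>Y_0\Rightarrow \tilde D=1$ and $Y_1<Y_0\Rightarrow \tilde D=0$.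
   Context: Roy model: $Y$ is a real observed outcome, $D\in\{0,1\}$ an observed sector indicator, $(Y_0,Y_1)$ real potential outcomes (ordered as $(Y_0,Y_1)$ in $\mathbb R^2$), with $Y=Y_1D+Y_0(1-D)$ and the selection rule $Y_1>Y_0\Rightarrow D=1$, $Y_1<Y_0\Rightarrow D=0$ (unspecified when $Y_1=Y_0$). *)

theory Defs
  imports "HOL-Probability.Probability"
begin

text \<open>Potential outcomes are ordered as (Y0, Y1) in R^2.\<close>

definition U1 :: "(real \<times> real) set \<Rightarrow> real set" where
  "U1 A = {y. \<exists>x. x \<le> y \<and> (x, y) \<in> A}"

definition U0 :: "(real \<times> real) set \<Rightarrow> real set" where
  "U0 A = {y. \<exists>x. x \<le> y \<and> (y, x) \<in> A}"

definition L1 :: "(real \<times> real) set \<Rightarrow> real set" where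
  "L1 A = {y. \<forall>x. x \<le> y \<longrightarrow> (x, y) \<in> A}"

definition L0 :: "(real \<times> real) set \<Rightarrow> real set" where
  "L0 A = {y. \<forall>x. x \<le> y \<longrightarrow> (y, x) \<in> A}"

text \<open>Observable law P of (Y,D) on R x {0,1} (D encoded as bool, True = 1).
  Probabilities of the (possibly only analytic / co-analytic, hence universally
  measurable) sets U and L are taken w.r.t. the completion of P.\<close>

definition sharp_bounds :: "(real \<times> bool) measure \<Rightarrow> (real \<times> real) measure \<Rightarrow> bool" where
  "sharp_bounds P \<nu> \<longleftrightarrow>
    (\<forall>A \<in> sets (borel :: (real \<times> real) measure).
       measure (completion P) (L0 A \<times> {False}) + measure (completion P) (L1 A \<times> {True})
         \<le> measure \<nu> A
     \<and> measure \<nu> A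
         \<le> measure (completion P) (U0 A \<times> {False}) + measure (completion P) (U1 A \<times> {True}))"

definition roy_realization ::
  "'c measure \<Rightarrow> ('c \<Rightarrow> real) \<Rightarrow> ('c \<Rightarrow> bool) \<Rightarrow> ('c \<Rightarrow> real) \<Rightarrow> ('c \<Rightarrow> real)
   \<Rightarrow> (real \<times> bool) measure \<Rightarrow> (real \<times> real) measure \<Rightarrow> bool" where
  "roy_realization M Yt Dt Y0 Y1 P \<nu> \<longleftrightarrow>
     prob_space M \<and>
     Yt \<in> borel_measurable M \<and> Dt \<in> measurable M (count_space UNIV) \<and>
     Y0 \<in> borel_measurable M \<and> Y1 \<in> borel_measurable M \<and>
     distr M (borel \<Otimes>\<^sub>M count_space UNIV) (\<lambda>\<omega>. (Yt \<omega>, Dt \<omega>)) = P \<and>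
     distr M borel (\<lambda>\<omega>. (Y0 \<omega>, Y1 \<omega>)) = \<nu> \<and>
     (\<forall>\<omega> \<in> space M. Yt \<omega> = (if Dt \<omega> then Y1 \<omega> else Y0 \<omega>)) \<and>
     (AE \<omega> in M. (Y1 \<omega> > Y0 \<omega> \<longrightarrow> Dt \<omega>) \<and> (Y1 \<omega> < Y0 \<omega> \<longrightarrow> \<not> Dt \<omega>))"

end

theory Submission
  imports Defs
begin

(* Necessity: if D = 1 then Y0 <= Y1 = Y, so Y in L1 A forces (Y0, Y1) in A and
   (Y0, Y1) in A forces Y in U1 A; symmetrically for D = 0. The sets U0 A and U1 A are
   projections of Borel sets, hence analytic, and the capacitability argument shows that they
   are measurable for the completion of every finite Borel measure, which makes the upper
   bound meaningful.

   Sufficiency: applied to A = {Y0 <> Y1, (max, [Y0 < Y1]) in G} the upper bound says that the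
   law of the selected observation of the strictly ordered potential outcomes is dominated by
   the law P of (Y, D); applied to A = {max (Y0, Y1) in B} both bounds say that max (Y0, Y1)
   has the law of Y. So the residual of P puts exactly the diagonal mass of nu on Y, and the
   measure sending off-diagonal outcomes to their selected observation and the residual to
   the diagonal couples P and nu as a Roy model. *)

text \<open>\<open>seq_closed C\<close> is sequential closedness in \<open>X \<times> \<real>\<^sup>\<nat>\<close> with the product topology, so
  \<open>souslin S\<close> says that \<open>S\<close> is the projection of such a set, that is, an analytic set.\<close>

definition seq_closed :: "('a::topological_space \<times> (nat \<Rightarrow> real)) set \<Rightarrow> bool" where
  "seq_closed C \<longleftrightarrow> (\<forall>s z s0 z0. (\<forall>k. (s k, z k) \<in> C) \<and> s \<longlonglongrightarrow> s0 \<and> (\<forall>i. (\<lambda>k. z k i) \<longlonglongrightarrow> z0 i)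
      \<longrightarrow> (s0, z0) \<in> C)"

definition souslin :: "'a::topological_space set \<Rightarrow> bool" where
  "souslin S \<longleftrightarrow> (\<exists>C. seq_closed C \<and> S = Domain C)"

lemma seq_closedD:
  assumes "seq_closed C" "\<And>k. (s k, z k) \<in> C" "s \<longlonglongrightarrow> s0" "\<And>i. (\<lambda>k. z k i) \<longlonglongrightarrow> z0 i"
  shows "(s0, z0) \<in> C"
  using assms unfolding seq_closed_def by blast

lemma seq_closedI:
  assumes "\<And>s z s0 z0. \<lbrakk>\<And>k. (s k, z k) \<in> C; s \<longlonglongrightarrow> s0; \<And>i. (\<lambda>k. z k i) \<longlonglongrightarrow> z0 i\<rbrakk>
    \<Longrightarrow> (s0, z0) \<in> C"
  shows "seq_closed C"
  using assms unfolding seq_closed_def by blast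

lemma souslin_closed:
  fixes S :: "'a::metric_space set"
  assumes "closed S"
  shows "souslin S"
proof -
  have "seq_closed (S \<times> (UNIV :: (nat \<Rightarrow> real) set))"
    using assms by (intro seq_closedI) (auto simp: closed_sequential_limits)
  then show ?thesis
    unfolding souslin_def by (intro exI[of _ "S \<times> UNIV"]) auto
qed

lemma souslin_INT:
  assumes "\<And>n::nat. souslin (S n)"
  shows "souslin (\<Inter>n. S n)"
proof -
  have "\<forall>n. \<exists>C. seq_closed C \<and> S n = Domain C"
    using assms unfolding souslin_def by blast
  then obtain C where C: "\<And>n. seq_closed (C n)" "\<And>n. S n = Domain (C n)"
    by (auto dest!: choice)
  define C' where "C' = {(s, z). \<forall>n. (s, \<lambda>i. z (prod_encode (n, i))) \<in> C n}"
  have "seq_closed C'"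
  proof (rule seq_closedI)
    fix s z s0 z0
    assume sz: "\<And>k. (s k, z k) \<in> C'" and s: "s \<longlonglongrightarrow> s0" and z: "\<And>i. (\<lambda>k. z k i) \<longlonglongrightarrow> z0 i"
    have "(s0, \<lambda>i. z0 (prod_encode (n, i))) \<in> C n" for n
      by (rule seq_closedD[OF C(1), of s "\<lambda>k i. z k (prod_encode (n, i))"])
        (use sz s z in \<open>auto simp: C'_def\<close>)
    then show "(s0, z0) \<in> C'"
      unfolding C'_def by blast
  qed
  moreover have "(\<Inter>n. S n) = Domain C'"
  proof (rule set_eqI)
    fix s
    have "s \<in> (\<Inter>n. S n) \<longleftrightarrow> (\<forall>n. \<exists>z. (s, z) \<in> C n)"
      by (simp add: C(2) Domain_iff)
    also have "\<dots> \<longleftrightarrow> (\<exists>z. \<forall>n. (s, z n) \<in> C n)"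
      by (rule choice_iff)
    also have "\<dots> \<longleftrightarrow> s \<in> Domain C'"
    proof
      assume "\<exists>z. \<forall>n. (s, z n) \<in> C n"
      then obtain z where "\<And>n. (s, z n) \<in> C n" by blast
      then have "(s, \<lambda>m. case prod_decode m of (n, i) \<Rightarrow> z n i) \<in> C'"
        by (simp add: C'_def)
      then show "s \<in> Domain C'" by blast
    qed (auto simp: C'_def)
    finally show "s \<in> (\<Inter>n. S n) \<longleftrightarrow> s \<in> Domain C'" .
  qed
  ultimately show ?thesis unfolding souslin_def by blast
qed

lemma souslin_UN:
  assumes "\<And>n::nat. souslin (S n)"
  shows "souslin (\<Union>n. S n)"
proof -
  have "\<forall>n. \<exists>C. seq_closed C \<and> S n = Domain C"
    using assms unfolding souslin_def by blast
  then obtain C where C: "\<And>n. seq_closed (C n)" "\<And>n. S n = Domain (C n)"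
    by (auto dest!: choice)
  \<comment> \<open>coordinate 0 of the witness records the index n; being a natural number, it is
    eventually constant along a convergent sequence\<close>
  define C' where "C' = {(s, z). \<exists>n. z 0 = real n \<and> (s, \<lambda>i. z (Suc i)) \<in> C n}"
  have "seq_closed C'"
  proof (rule seq_closedI)
    fix s z s0 z0
    assume sz: "\<And>k. (s k, z k) \<in> C'" and s: "s \<longlonglongrightarrow> s0" and z: "\<And>i. (\<lambda>k. z k i) \<longlonglongrightarrow> z0 i"
    have "\<forall>k. \<exists>n. z k 0 = real n \<and> (s k, \<lambda>i. z k (Suc i)) \<in> C n"
      using sz by (auto simp: C'_def)
    then obtain n where n: "\<And>k. z k 0 = real (n k)" "\<And>k. (s k, \<lambda>i. z k (Suc i)) \<in> C (n k)"
      by (auto dest!: choice)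
    obtain N where N: "\<And>k. k \<ge> N \<Longrightarrow> dist (z k 0) (z0 0) < 1/2"
      using z[of 0] unfolding lim_sequentially by (metis half_gt_zero_iff zero_less_one)
    have n_eq: "n (k + N) = n N" for k
    proof -
      have "\<bar>real (n (k + N)) - real (n N)\<bar> < 1"
        using N[of "k + N"] N[of N] n(1)[of "k + N"] n(1)[of N]
        unfolding dist_real_def by arith
      then show ?thesis by linarith
    qed
    have "(\<lambda>k. z (k + N) 0) \<longlonglongrightarrow> z0 0"
      using LIMSEQ_ignore_initial_segment[OF z] .
    then have "z0 0 = real (n N)"
      using n(1) n_eq by (simp add: LIMSEQ_const_iff)
    moreover have "(s0, \<lambda>i. z0 (Suc i)) \<in> C (n N)"
    proof (rule seq_closedD[OF C(1), of "\<lambda>k. s (k + N)" "\<lambda>k i. z (k + N) (Suc i)"])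
      show "(s (k + N), \<lambda>i. z (k + N) (Suc i)) \<in> C (n N)" for k
        using n(2)[of "k + N"] n_eq[of k] by simp
    qed (rule LIMSEQ_ignore_initial_segment, rule s z)+
    ultimately show "(s0, z0) \<in> C'" by (auto simp: C'_def)
  qed
  moreover have "(\<Union>n. S n) = Domain C'"
  proof safe
    fix s n assume "s \<in> S n"
    then obtain z where "(s, z) \<in> C n" using C(2) by auto
    then have "(s, \<lambda>i. case i of 0 \<Rightarrow> real n | Suc j \<Rightarrow> z j) \<in> C'"
      by (auto simp: C'_def)
    then show "s \<in> Domain C'" by blast
  qed (auto simp: C'_def C(2))
  ultimately show ?thesis unfolding souslin_def by blast
qed

lemma souslin_open:
  fixes S :: "'a::metric_space set"
  assumes "open S"
  shows "souslin S"
proof (cases "S = UNIV")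
  case True
  then show ?thesis by (simp add: souslin_closed)
next
  case False
  define T where "T n = {x. 1 / real (Suc n) \<le> infdist x (- S)}" for n
  have "closed (T n)" for n
    unfolding T_def by (intro closed_Collect_le continuous_intros)
  moreover have "S = (\<Union>n. T n)"
  proof safe
    fix x assume "x \<in> S"
    then have "0 < infdist x (- S)"
      using False assms by (intro infdist_pos_not_in_closed) auto
    then obtain n where "1 / real (Suc n) < infdist x (- S)"
      by (metis inverse_eq_divide reals_Archimedean)
    then show "x \<in> (\<Union>n. T n)" by (auto simp: T_def intro: less_imp_le)
  next
    fix x n assume "x \<in> T n"
    then have "0 < infdist x (- S)"
      using order.strict_trans2[of 0 "1 / real (Suc n)" "infdist x (- S)"] by (simp add: T_def)
    then show "x \<in> S" by (metis ComplI infdist_zero less_irrefl)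
  qed
  ultimately show ?thesis by (metis souslin_UN souslin_closed)
qed

lemma souslin_borel:
  fixes S :: "'a::metric_space set"
  assumes "S \<in> sets borel"
  shows "souslin S"
proof -
  have "S \<in> sigma_sets UNIV {S. open S}" using assms sets_borel by blast
  then have "souslin S \<and> souslin (- S)"
  proof induction
    case (Basic a)
    then show ?case by (simp add: souslin_open souslin_closed closed_Compl)
  next
    case Empty
    then show ?case by (simp add: souslin_closed souslin_open)
  next
    case (Compl a)
    then show ?case by (simp add: Compl_eq_Diff_UNIV[symmetric])
  next
    case (Union a)
    then show ?case by (simp add: souslin_UN souslin_INT)
  qed
  then show ?thesis ..
qed

lemma souslin_converse:
  fixes S :: "('a::metric_space \<times> 'b::metric_space) set"
  assumes "souslin S"
  shows "souslin (S\<inverse>)"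
proof -
  obtain C where C: "seq_closed C" "S = Domain C"
    using assms unfolding souslin_def by blast
  define C' where "C' = {(p, z). (prod.swap p, z) \<in> C}"
  have "seq_closed C'"
  proof (rule seq_closedI)
    fix s z s0 z0
    assume sz: "\<And>k. (s k, z k) \<in> C'" and s: "s \<longlonglongrightarrow> s0" and z: "\<And>i. (\<lambda>k. z k i) \<longlonglongrightarrow> z0 i"
    have "(prod.swap s0, z0) \<in> C"
      by (rule seq_closedD[OF C(1), of "\<lambda>k. prod.swap (s k)" z])
        (use sz s z in \<open>auto simp: C'_def intro: isCont_tendsto_compose[OF isCont_swap]\<close>)
    then show "(s0, z0) \<in> C'" by (simp add: C'_def)
  qed
  moreover have "S\<inverse> = Domain C'"
  proof (rule set_eqI)
    fix p :: "'b \<times> 'a"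
    show "p \<in> S\<inverse> \<longleftrightarrow> p \<in> Domain C'"
      using C(2) by (cases p) (simp add: C'_def Domain_iff)
  qed
  ultimately show ?thesis unfolding souslin_def by blast
qed

lemma souslin_Domain:
  fixes S :: "('a::metric_space \<times> real) set"
  assumes "souslin S"
  shows "souslin (Domain S)"
proof -
  obtain C where C: "seq_closed C" "S = Domain C"
    using assms unfolding souslin_def by blast
  define C' where "C' = {(a, z). ((a, z 0), \<lambda>i. z (Suc i)) \<in> C}"
  have "seq_closed C'"
  proof (rule seq_closedI)
    fix s z s0 z0
    assume sz: "\<And>k. (s k, z k) \<in> C'" and s: "s \<longlonglongrightarrow> s0" and z: "\<And>i. (\<lambda>k. z k i) \<longlonglongrightarrow> z0 i"
    have "((s0, z0 0), \<lambda>i. z0 (Suc i)) \<in> C"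
      by (rule seq_closedD[OF C(1), of "\<lambda>k. (s k, z k 0)" "\<lambda>k i. z k (Suc i)"])
        (use sz s z in \<open>auto simp: C'_def intro: tendsto_Pair\<close>)
    then show "(s0, z0) \<in> C'" by (simp add: C'_def)
  qed
  moreover have "Domain S = Domain C'"
  proof safe
    fix a b assume "(a, b) \<in> S"
    then obtain z where "((a, b), z) \<in> C" using C(2) by auto
    then have "(a, \<lambda>i. case i of 0 \<Rightarrow> b | Suc j \<Rightarrow> z j) \<in> C'" by (simp add: C'_def)
    then show "a \<in> Domain C'" by blast
  qed (auto simp: C'_def C(2))
  ultimately show ?thesis unfolding souslin_def by blast
qed

lemma diagonal_convergent_subseq:
  fixes f :: "nat \<Rightarrow> nat \<Rightarrow> real"
  assumes bounded: "\<And>k i. \<bar>f k i\<bar> \<le> M i"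
  shows "\<exists>d. strict_mono d \<and> (\<forall>i. convergent (\<lambda>k. f (d k) i))"
proof -
  interpret subseqs "\<lambda>i d. convergent (\<lambda>k. f (d k) i)"
  proof (rule subseqs.intro)
    fix i and d :: "nat \<Rightarrow> nat"
    assume "strict_mono d"
    have "f (d k) i \<in> {-M i..M i}" for k
      using bounded by (simp add: abs_le_iff minus_le_iff)
    then obtain l d' where "strict_mono d'" "((\<lambda>k. f (d k) i) \<circ> d') \<longlonglongrightarrow> l"
      using compact_Icc compact_imp_seq_compact seq_compactE by metis
    then show "\<exists>d'. strict_mono d' \<and> convergent (\<lambda>k. f ((d \<circ> d') k) i)"
      by (auto simp: convergent_def comp_def)
  qed
  have "convergent (\<lambda>k. f (diagseq k) i)" for i
  proof -
    have "convergent (\<lambda>k. f ((diagseq \<circ> (+) (Suc i)) k) i)"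
    proof (rule diagseq_holds)
      fix r s :: "nat \<Rightarrow> nat" and n
      assume "strict_mono r" "convergent (\<lambda>k. f (s k) n)"
      then show "convergent (\<lambda>k. f ((s \<circ> r) k) n)"
        using convergent_subseq_convergent[of "\<lambda>k. f (s k) n" r] by (simp add: comp_def)
    qed
    then show ?thesis
      using convergent_ignore_initial_segment[of "\<lambda>k. f (diagseq k) i" "Suc i"] by (simp add: comp_def ac_simps)
  qed
  then show ?thesis
    using subseq_diagseq by blast
qed

lemma less_outer_measure_of_incseq:
  assumes "space M = UNIV" "incseq A" "t < outer_measure_of M (\<Union>n. A n) + e"
  shows "\<exists>n. t < outer_measure_of M (A n) + e"
proof -
  have "t < (SUP n. outer_measure_of M (A n)) + e"
    using assms by (simp add: SUP_outer_measure_of_incseq)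
  also have "\<dots> = (SUP n. outer_measure_of M (A n) + e)"
    by (rule ennreal_SUP_add_left[symmetric]) simp
  finally show ?thesis by (simp add: less_SUP_iff)
qed

definition coord_box :: "(nat \<Rightarrow> nat) \<Rightarrow> nat \<Rightarrow> ('a \<times> (nat \<Rightarrow> real)) set" where
  "coord_box b n = {(y, w). \<forall>i<n. \<bar>w i\<bar> \<le> real (b i)}"

lemma coord_box_0 [simp]: "coord_box b 0 = UNIV"
  by (simp add: coord_box_def)

lemma coord_box_Suc_upd:
  "coord_box (b(n := m)) (Suc n) = coord_box b n \<inter> {(y, w). \<bar>w n\<bar> \<le> real m}"
  by (auto simp: coord_box_def less_Suc_eq)

lemma coord_box_Suc_subset: "coord_box b (Suc n) \<subseteq> coord_box b n"
  by (auto simp: coord_box_def)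

lemma coord_box_cong: "(\<And>i. i < n \<Longrightarrow> b i = b' i) \<Longrightarrow> coord_box b n = coord_box b' n"
  by (simp add: coord_box_def)

text \<open>The capacitability argument for Souslin sets: the bounds are chosen one coordinate at a
  time, using that outer measure is continuous along increasing unions.\<close>

lemma exists_coord_box_outer_measure:
  fixes C :: "('a \<times> (nat \<Rightarrow> real)) set"
  assumes space: "space M = UNIV" and t: "t < outer_measure_of M (Domain C) + e"
  shows "\<exists>b. \<forall>n. t < outer_measure_of M (Domain (C \<inter> coord_box b n)) + e"
proof -
  define Q where "Q n b \<longleftrightarrow> t < outer_measure_of M (Domain (C \<inter> coord_box b n)) + e" for n b
  have step: "\<exists>b'. Q (Suc n) b' \<and> (\<forall>i<n. b' i = b i)" if "Q n b" for n b
  proof -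
    have mono: "incseq (\<lambda>m. Domain (C \<inter> coord_box (b(n := m)) (Suc n)))"
      unfolding incseq_def coord_box_Suc_upd by (intro allI impI Domain_mono) auto
    have union: "(\<Union>m. Domain (C \<inter> coord_box (b(n := m)) (Suc n))) = Domain (C \<inter> coord_box b n)"
    proof (intro equalityI subsetI)
      fix y assume "y \<in> Domain (C \<inter> coord_box b n)"
      then obtain w where "(y, w) \<in> C \<inter> coord_box b n" by blast
      then have "(y, w) \<in> C \<inter> coord_box (b(n := nat \<lceil>\<bar>w n\<bar>\<rceil>)) (Suc n)"
        unfolding coord_box_Suc_upd by (simp add: real_nat_ceiling_ge)
      then show "y \<in> (\<Union>m. Domain (C \<inter> coord_box (b(n := m)) (Suc n)))" by blast
    qed (auto simp: coord_box_Suc_upd)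
    have "\<exists>m. Q (Suc n) (b(n := m))"
      unfolding Q_def by (rule less_outer_measure_of_incseq[OF space mono]) (use that union in \<open>simp add: Q_def\<close>)
    then show ?thesis by auto
  qed
  have "\<exists>b. Q 0 b"
    using t by (simp add: Q_def)
  from dependent_nat_choice[of Q "\<lambda>n b b'. \<forall>i<n. b' i = b i", OF this step]
  obtain f where f: "\<And>n. Q n (f n)" "\<And>n i. i < n \<Longrightarrow> f (Suc n) i = f n i"
    by blast
  have f_stable: "f n i = f (Suc i) i" if "i < n" for n i
    using that
  proof (induction n)
    case (Suc n)
    then show ?case using f(2)[of i n] by (cases "i = n") auto
  qed simp
  have "coord_box (f n) n = coord_box (\<lambda>i. f (Suc i) i) n" for n
    by (rule coord_box_cong) (rule f_stable)
  then have "Q n (\<lambda>i. f (Suc i) i)" for n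
    using f(1)[of n] unfolding Q_def by metis
  then show ?thesis unfolding Q_def by blast
qed

lemma seq_closed_INT_closure_subset:
  fixes C :: "('a::metric_space \<times> (nat \<Rightarrow> real)) set"
  assumes "seq_closed C"
  shows "(\<Inter>n. closure (Domain (C \<inter> coord_box b n))) \<subseteq> Domain C"
proof
  fix x assume x: "x \<in> (\<Inter>n. closure (Domain (C \<inter> coord_box b n)))"
  have "\<forall>k. \<exists>p. p \<in> C \<inter> coord_box b k \<and> dist (fst p) x < 1 / real (Suc k)"
  proof
    fix k
    have "x \<in> closure (Domain (C \<inter> coord_box b k))" using x by blast
    moreover have "0 < 1 / real (Suc k)" by simp
    ultimately obtain y where "y \<in> Domain (C \<inter> coord_box b k)" "dist y x < 1 / real (Suc k)"
      unfolding closure_approachable by blast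
    then show "\<exists>p. p \<in> C \<inter> coord_box b k \<and> dist (fst p) x < 1 / real (Suc k)" by auto
  qed
  then obtain p where p: "\<And>k. p k \<in> C \<inter> coord_box b k" "\<And>k. dist (fst (p k)) x < 1 / real (Suc k)"
    using choice[of "\<lambda>k p. p \<in> C \<inter> coord_box b k \<and> dist (fst p) x < 1 / real (Suc k)"] by blast
  define y where "y k = fst (p k)" for k
  define w where "w k = snd (p k)" for k
  have yw: "(y k, w k) \<in> C \<inter> coord_box b k" for k
    using p(1) by (simp add: y_def w_def)
  \<comment> \<open>coordinate i of w k is bounded by b i only once k > i; the truncation is bounded everywhere\<close>
  define w' where "w' k i = (if i < k then w k i else 0)" for k i
  have "\<bar>w' k i\<bar> \<le> real (b i)" for k i
    using yw[of k] by (auto simp: w'_def coord_box_def)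
  then obtain d where d: "strict_mono d" "\<And>i. convergent (\<lambda>k. w' (d k) i)"
    using diagonal_convergent_subseq[of w' "\<lambda>i. real (b i)"] by blast
  define z where "z i = lim (\<lambda>k. w' (d k) i)" for i
  have w_lim: "(\<lambda>k. w (d k) i) \<longlonglongrightarrow> z i" for i
  proof -
    have "w' (d k) i = w (d k) i" if "Suc i \<le> k" for k
      using that seq_suble[OF d(1), of k] by (simp add: w'_def)
    then have "\<forall>\<^sub>F k in sequentially. w' (d k) i = w (d k) i"
      unfolding eventually_sequentially by blast
    moreover have "(\<lambda>k. w' (d k) i) \<longlonglongrightarrow> z i"
      using d(2) unfolding z_def convergent_LIMSEQ_iff .
    ultimately show ?thesis
      by (rule Lim_transform_eventually[rotated])
  qed
  have "(\<lambda>k. dist (y k) x) \<longlonglongrightarrow> 0"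
  proof (rule Lim_null_comparison[OF _ LIMSEQ_inverse_real_of_nat])
    show "\<forall>\<^sub>F k in sequentially. norm (dist (y k) x) \<le> inverse (real (Suc k))"
      using p(2) by (simp add: y_def inverse_eq_divide less_imp_le)
  qed
  then have y_lim: "(\<lambda>k. y (d k)) \<longlonglongrightarrow> x"
    using LIMSEQ_subseq_LIMSEQ[OF tendsto_dist_iff[THEN iffD2] d(1)] by (simp add: comp_def)
  have "(x, z) \<in> C"
  proof (rule seq_closedD[OF assms _ y_lim w_lim])
    show "(y (d k), w (d k)) \<in> C" for k
      using yw[of "d k"] by blast
  qed
  then show "x \<in> Domain C" by blast
qed

lemma seq_closed_Domain_inner_approx:
  fixes M :: "'a::metric_space measure" and C :: "('a \<times> (nat \<Rightarrow> real)) set"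
  assumes "finite_measure M" "sets M = sets borel" "seq_closed C" "0 < e"
  shows "\<exists>W \<in> sets borel. W \<subseteq> Domain C \<and> outer_measure_of M (Domain C) \<le> emeasure M W + ennreal e"
proof -
  interpret finite_measure M by fact
  have space: "space M = UNIV"
    using sets_eq_imp_space_eq[OF assms(2)] by simp
  define t where "t = outer_measure_of M (Domain C)"
  have "t \<le> emeasure M (space M)"
    unfolding t_def by (metis outer_measure_of_eq outer_measure_of_mono sets.top subset_UNIV space)
  then have "t \<noteq> \<infinity>"
    using emeasure_finite top.extremum_unique by (metis infinity_ennreal_def)
  then have "t < t + ennreal e"
    using \<open>0 < e\<close> ennreal_add_left_cancel_less[of t 0 "ennreal e"] by simp
  then have "t < outer_measure_of M (Domain C) + ennreal e"
    unfolding t_def[symmetric] .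
  then obtain b where b: "\<And>n. t < outer_measure_of M (Domain (C \<inter> coord_box b n)) + ennreal e"
    using exists_coord_box_outer_measure[OF space] by blast
  define K where "K n = closure (Domain (C \<inter> coord_box b n))" for n
  have K_sets: "K n \<in> sets M" for n
    unfolding K_def assms(2) by simp
  have "decseq K"
    unfolding decseq_Suc_iff K_def
    by (intro allI closure_mono Domain_mono Int_mono order_refl coord_box_Suc_subset)
  then have lim: "(\<lambda>n. emeasure M (K n)) \<longlonglongrightarrow> emeasure M (\<Inter>n. K n)"
    using K_sets by (intro Lim_emeasure_decseq) auto
  have "t \<le> emeasure M (K n) + ennreal e" for n
  proof -
    have "outer_measure_of M (Domain (C \<inter> coord_box b n)) \<le> outer_measure_of M (K n)"
      unfolding K_def by (rule outer_measure_of_mono[OF closure_subset])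
    also have "\<dots> = emeasure M (K n)"
      using K_sets by simp
    finally show ?thesis
      using b[of n] by (meson add_right_mono less_imp_le order_trans)
  qed
  then have "t \<le> emeasure M (\<Inter>n. K n) + ennreal e"
    by (intro LIMSEQ_le_const[OF tendsto_add[OF lim tendsto_const]]) auto
  moreover have "(\<Inter>n. K n) \<subseteq> Domain C"
    unfolding K_def by (rule seq_closed_INT_closure_subset[OF assms(3)])
  moreover have "(\<Inter>n. K n) \<in> sets borel"
    unfolding K_def by (intro borel_closed closed_INT) simp
  ultimately show ?thesis
    unfolding t_def by blast
qed

lemma sets_completion_inner_approx:
  assumes "finite_measure M"
    and approx: "\<And>e. 0 < e \<Longrightarrow> \<exists>W \<in> sets M. W \<subseteq> S \<and> outer_measure_of M S \<le> emeasure M W + ennreal e"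
    and "S \<subseteq> space M"
  shows "S \<in> sets (completion M)"
proof -
  interpret finite_measure M by fact
  obtain W where W: "\<And>n. W n \<in> sets M" "\<And>n. W n \<subseteq> S"
    "\<And>n. outer_measure_of M S \<le> emeasure M (W n) + ennreal (1 / real (Suc n))"
    using approx[of "1 / real (Suc _)"] by (metis of_nat_0_less_iff zero_less_Suc zero_less_divide_1_iff)
  have W_sets: "(\<Union>n. W n) \<in> sets M" and W_sub: "(\<Union>n. W n) \<subseteq> S"
    using W by auto
  have inner: "outer_measure_of M S \<le> emeasure M (\<Union>n. W n)"
  proof (rule ennreal_le_epsilon)
    fix e :: real assume "0 < e"
    then obtain n where n: "1 / real (Suc n) < e"
      by (metis inverse_eq_divide reals_Archimedean)
    have "outer_measure_of M S \<le> emeasure M (W n) + ennreal (1 / real (Suc n))"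
      by (rule W(3))
    also have "\<dots> \<le> emeasure M (\<Union>n. W n) + ennreal e"
      using W_sets n by (intro add_mono emeasure_mono ennreal_leI) auto
    finally show "outer_measure_of M S \<le> emeasure M (\<Union>n. W n) + ennreal e" .
  qed
  obtain H where H: "H \<in> sets M" "S \<subseteq> H" "outer_measure_of M S = emeasure M H"
    using outer_measure_of_attain[OF assms(3)] by blast
  have "emeasure M (H - (\<Union>n. W n)) = emeasure M H - emeasure M (\<Union>n. W n)"
    using H W_sets W_sub by (intro emeasure_Diff) auto
  also have "\<dots> = 0"
    using inner H(3) emeasure_mono[of "\<Union>n. W n" H M] H W_sub by (simp add: diff_eq_0_iff_ennreal less_top[symmetric])
  finally have "H - (\<Union>n. W n) \<in> null_sets M"
    using H W_sets by (intro null_setsI) auto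
  then show ?thesis
    by (intro sets_completionI[of _ "\<Union>n. W n" "S - (\<Union>n. W n)" "H - (\<Union>n. W n)"])
      (use W_sets W_sub H in auto)
qed

lemma souslin_in_completion:
  fixes M :: "'a::metric_space measure"
  assumes "finite_measure M" "sets M = sets borel" "souslin S"
  shows "S \<in> sets (completion M)"
proof -
  obtain C where C: "seq_closed C" "S = Domain C"
    using assms(3) unfolding souslin_def by blast
  show ?thesis
    unfolding C(2)
  proof (rule sets_completion_inner_approx[OF assms(1)])
    show "Domain C \<subseteq> space M"
      using sets_eq_imp_space_eq[OF assms(2)] by simp
    show "\<exists>W\<in>sets M. W \<subseteq> Domain C \<and> outer_measure_of M (Domain C) \<le> emeasure M W + ennreal e"
      if "0 < e" for e
      using seq_closed_Domain_inner_approx[OF assms(1,2) C(1) that] assms(2) by simp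
  qed
qed

lemma emeasure_distr_restrict_space:
  assumes "S \<in> sets M" "f \<in> measurable M N" "E \<in> sets N"
  shows "emeasure (distr (restrict_space M S) N f) E = emeasure M (S \<inter> f -` E)"
proof -
  have "emeasure (distr (restrict_space M S) N f) E = emeasure (restrict_space M S) (f -` E \<inter> S)"
    using assms by (simp add: emeasure_distr measurable_restrict_space1)
  also have "\<dots> = emeasure M (S \<inter> f -` E)"
    using assms sets.sets_into_space[OF assms(1)]
    by (subst emeasure_restrict_space) (auto simp: Int_commute Int_absorb2)
  finally show ?thesis .
qed

lemma souslin_times_in_completion:
  fixes P :: "(real \<times> bool) measure" and T :: "real set"
  assumes "finite_measure P" and sets_P: "sets P = sets (borel \<Otimes>\<^sub>M count_space UNIV)"
    and "souslin T"
  shows "T \<times> {d} \<in> sets (completion P)"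
proof -
  have slice: "B \<times> {d} \<in> sets P" if "B \<in> sets borel" for B
    unfolding sets_P using that by (intro pair_measureI) auto
  have fst: "fst \<in> measurable P borel"
    using measurable_fst by (simp add: measurable_cong_sets[OF sets_P refl])
  define \<mu> where "\<mu> = distr (restrict_space P (UNIV \<times> {d})) borel fst"
  have \<mu>: "emeasure \<mu> B = emeasure P (B \<times> {d})" if "B \<in> sets borel" for B
  proof -
    have "(UNIV \<times> {d}) \<inter> fst -` B = B \<times> {d}" by auto
    then show ?thesis
      unfolding \<mu>_def using emeasure_distr_restrict_space[OF slice fst that] by simp
  qed
  have "finite_measure \<mu>"
    unfolding \<mu>_def using slice[of UNIV] fst
    by (intro finite_measure.finite_measure_distr finite_measure_restrict_space assms(1)
        measurable_restrict_space1) auto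
  then have "T \<in> sets (completion \<mu>)"
    by (rule souslin_in_completion) (simp_all add: \<mu>_def assms(3))
  then obtain S N N' where SN: "T = S \<union> N" "N \<subseteq> N'" "N' \<in> null_sets \<mu>" "S \<in> sets \<mu>"
    by (rule sets_completionE)
  have "N' \<in> sets borel" "S \<in> sets borel"
    using SN by (auto simp: \<mu>_def)
  then have "N' \<times> {d} \<in> null_sets P" "S \<times> {d} \<in> sets P"
    using SN(3) \<mu> slice by (auto simp: null_sets_def)
  then show ?thesis
    by (intro sets_completionI[of _ "S \<times> {d}" "N \<times> {d}" "N' \<times> {d}"]) (use SN in auto)
qed

lemma U0_eq_Domain: "U0 A = Domain (A \<inter> {p. snd p \<le> fst p})"
  by (auto simp: U0_def)

lemma U1_eq_Domain_converse: "U1 A = Domain ((A \<inter> {p. fst p \<le> snd p})\<inverse>)"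
  by (auto simp: U1_def)

lemma U_times_in_completion:
  fixes P :: "(real \<times> bool) measure"
  assumes "finite_measure P" "sets P = sets (borel \<Otimes>\<^sub>M count_space UNIV)"
    and "A \<in> sets (borel :: (real \<times> real) measure)"
  shows "U0 A \<times> {False} \<in> sets (completion P)" "U1 A \<times> {True} \<in> sets (completion P)"
proof -
  have "closed {p :: real \<times> real. snd p \<le> fst p}" "closed {p :: real \<times> real. fst p \<le> snd p}"
    by (intro closed_Collect_le continuous_intros)+
  then have "souslin (A \<inter> {p. snd p \<le> fst p})" "souslin (A \<inter> {p. fst p \<le> snd p})"
    using assms(3) by (auto intro: souslin_borel)
  then have "souslin (U0 A)" "souslin (U1 A)"
    unfolding U0_eq_Domain U1_eq_Domain_converse
    by (blast intro: souslin_Domain souslin_converse)+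
  then show "U0 A \<times> {False} \<in> sets (completion P)" "U1 A \<times> {True} \<in> sets (completion P)"
    using souslin_times_in_completion[OF assms(1,2)] by auto
qed

lemma measure_completion_inner:
  "\<exists>G \<in> sets M. G \<subseteq> X \<and> measure (completion M) X = measure M G"
proof (cases "X \<in> sets (completion M)")
  case True
  then have "main_part M X \<subseteq> X"
    using main_part_null_part_Un[OF True] by blast
  then show ?thesis
    using True by (intro bexI[of _ "main_part M X"]) (auto simp: measure_def)
next
  case False
  then show ?thesis
    by (intro bexI[of _ "{}"]) (auto simp: measure_notin_sets)
qed

lemma measure_completion_outer:
  assumes "X \<in> sets (completion M)"
  shows "\<exists>H \<in> sets M. X \<subseteq> H \<and> measure (completion M) X = measure M H"
proof -
  obtain N where N: "N \<in> null_sets M" "null_part M X \<subseteq> N"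
    using null_part[OF assms] by blast
  have "X \<subseteq> main_part M X \<union> N"
    using main_part_null_part_Un[OF assms] N(2) by blast
  moreover have "measure M (main_part M X \<union> N) = measure M (main_part M X)"
    unfolding measure_def using main_part_sets[OF assms] N(1) by (simp add: emeasure_Un_null_set)
  ultimately show ?thesis
    using main_part_sets[OF assms] N(1) assms
    by (intro bexI[of _ "main_part M X \<union> N"]) (auto simp: measure_def)
qed

lemma measure_distr_le_AE:
  assumes "finite_measure M" "X \<in> measurable M N" "Z \<in> measurable M K" "S \<in> sets N" "T \<in> sets K"
    and "AE \<omega> in M. X \<omega> \<in> S \<longrightarrow> Z \<omega> \<in> T"
  shows "measure (distr M N X) S \<le> measure (distr M K Z) T"
  using assms
  by (simp add: measure_distr finite_measure.finite_measure_mono_AE measurable_sets)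

definition roy_consistent :: "real \<Rightarrow> bool \<Rightarrow> real \<Rightarrow> real \<Rightarrow> bool" where
  "roy_consistent y d y0 y1 \<longleftrightarrow> y = (if d then y1 else y0) \<and> (y0 < y1 \<longrightarrow> d) \<and> (y1 < y0 \<longrightarrow> \<not> d)"

lemma roy_consistent_L_imp_mem:
  assumes "roy_consistent y d y0 y1" "(y, d) \<in> L0 A \<times> {False} \<union> L1 A \<times> {True}"
  shows "(y0, y1) \<in> A"
  using assms by (cases d) (auto simp: roy_consistent_def L0_def L1_def not_less)

lemma roy_consistent_mem_imp_U:
  assumes "roy_consistent y d y0 y1" "(y0, y1) \<in> A"
  shows "(y, d) \<in> U0 A \<times> {False} \<union> U1 A \<times> {True}"
  using assms by (cases d) (auto simp: roy_consistent_def U0_def U1_def not_less)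

lemma roy_realization_AE_consistent:
  assumes "roy_realization M Yt Dt Y0 Y1 P \<nu>"
  shows "AE \<omega> in M. roy_consistent (Yt \<omega>) (Dt \<omega>) (Y0 \<omega>) (Y1 \<omega>)"
proof -
  have sel: "AE \<omega> in M. (Y1 \<omega> > Y0 \<omega> \<longrightarrow> Dt \<omega>) \<and> (Y1 \<omega> < Y0 \<omega> \<longrightarrow> \<not> Dt \<omega>)"
    and Yt: "\<forall>\<omega> \<in> space M. Yt \<omega> = (if Dt \<omega> then Y1 \<omega> else Y0 \<omega>)"
    using assms by (simp_all add: roy_realization_def)
  from AE_space sel show ?thesis
    by eventually_elim (use Yt in \<open>auto simp: roy_consistent_def\<close>)
qed

lemma roy_realization_measure_le:
  assumes R: "roy_realization M Yt Dt Y0 Y1 P \<nu>" and "G \<in> sets P" "A \<in> sets borel"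
    and G_A: "\<And>y d y0 y1. roy_consistent y d y0 y1 \<Longrightarrow> (y, d) \<in> G \<Longrightarrow> (y0, y1) \<in> A"
  shows "measure P G \<le> measure \<nu> A"
proof -
  have "finite_measure M" "(\<lambda>\<omega>. (Yt \<omega>, Dt \<omega>)) \<in> measurable M (borel \<Otimes>\<^sub>M count_space UNIV)"
    "(\<lambda>\<omega>. (Y0 \<omega>, Y1 \<omega>)) \<in> borel_measurable M"
    "P = distr M (borel \<Otimes>\<^sub>M count_space UNIV) (\<lambda>\<omega>. (Yt \<omega>, Dt \<omega>))" "\<nu> = distr M borel (\<lambda>\<omega>. (Y0 \<omega>, Y1 \<omega>))"
    using R by (auto simp: roy_realization_def prob_space.finite_measure)
  moreover have "AE \<omega> in M. (Yt \<omega>, Dt \<omega>) \<in> G \<longrightarrow> (Y0 \<omega>, Y1 \<omega>) \<in> A"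
    using roy_realization_AE_consistent[OF R] by eventually_elim (blast intro: G_A)
  ultimately show ?thesis
    using assms(2,3) by (simp add: measure_distr_le_AE)
qed

lemma roy_realization_measure_ge:
  assumes R: "roy_realization M Yt Dt Y0 Y1 P \<nu>" and "H \<in> sets P" "A \<in> sets borel"
    and A_H: "\<And>y d y0 y1. roy_consistent y d y0 y1 \<Longrightarrow> (y0, y1) \<in> A \<Longrightarrow> (y, d) \<in> H"
  shows "measure \<nu> A \<le> measure P H"
proof -
  have "finite_measure M" "(\<lambda>\<omega>. (Yt \<omega>, Dt \<omega>)) \<in> measurable M (borel \<Otimes>\<^sub>M count_space UNIV)"
    "(\<lambda>\<omega>. (Y0 \<omega>, Y1 \<omega>)) \<in> borel_measurable M"
    "P = distr M (borel \<Otimes>\<^sub>M count_space UNIV) (\<lambda>\<omega>. (Yt \<omega>, Dt \<omega>))" "\<nu> = distr M borel (\<lambda>\<omega>. (Y0 \<omega>, Y1 \<omega>))"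
    using R by (auto simp: roy_realization_def prob_space.finite_measure)
  moreover have "AE \<omega> in M. (Y0 \<omega>, Y1 \<omega>) \<in> A \<longrightarrow> (Yt \<omega>, Dt \<omega>) \<in> H"
    using roy_realization_AE_consistent[OF R] by eventually_elim (blast intro: A_H)
  ultimately show ?thesis
    using assms(2,3) by (simp add: measure_distr_le_AE)
qed

lemma roy_realization_imp_sharp_bounds:
  assumes R: "roy_realization M Yt Dt Y0 Y1 P \<nu>"
  shows "sharp_bounds P \<nu>"
proof -
  have P: "P = distr M (borel \<Otimes>\<^sub>M count_space UNIV) (\<lambda>\<omega>. (Yt \<omega>, Dt \<omega>))"
    and M: "prob_space M" and YD: "(\<lambda>\<omega>. (Yt \<omega>, Dt \<omega>)) \<in> measurable M (borel \<Otimes>\<^sub>M count_space UNIV)"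
    using R by (auto simp: roy_realization_def)
  interpret P: prob_space P
    unfolding P by (rule prob_space.prob_space_distr[OF M YD])
  have sets_P: "sets P = sets (borel \<Otimes>\<^sub>M count_space UNIV)"
    by (simp add: P)
  show ?thesis
    unfolding sharp_bounds_def
  proof (intro ballI conjI)
    fix A :: "(real \<times> real) set"
    assume A: "A \<in> sets borel"
    obtain G0 where G0: "G0 \<in> sets P" "G0 \<subseteq> L0 A \<times> {False}"
      "measure (completion P) (L0 A \<times> {False}) = measure P G0"
      using measure_completion_inner[of P "L0 A \<times> {False}"] by blast
    obtain G1 where G1: "G1 \<in> sets P" "G1 \<subseteq> L1 A \<times> {True}"
      "measure (completion P) (L1 A \<times> {True}) = measure P G1"
      using measure_completion_inner[of P "L1 A \<times> {True}"] by blast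
    have "measure P G0 + measure P G1 = measure P (G0 \<union> G1)"
      using G0 G1 by (intro P.finite_measure_Union[symmetric]) auto
    also have "\<dots> \<le> measure \<nu> A"
      using G0 G1 A by (intro roy_realization_measure_le[OF R]) (auto intro: roy_consistent_L_imp_mem)
    finally show "measure (completion P) (L0 A \<times> {False}) + measure (completion P) (L1 A \<times> {True})
        \<le> measure \<nu> A"
      using G0(3) G1(3) by simp
    obtain H0 where H0: "H0 \<in> sets P" "U0 A \<times> {False} \<subseteq> H0"
      "measure (completion P) (U0 A \<times> {False}) = measure P H0"
      using measure_completion_outer[OF U_times_in_completion(1)[OF P.finite_measure_axioms sets_P A]] by blast
    obtain H1 where H1: "H1 \<in> sets P" "U1 A \<times> {True} \<subseteq> H1"
      "measure (completion P) (U1 A \<times> {True}) = measure P H1"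
      using measure_completion_outer[OF U_times_in_completion(2)[OF P.finite_measure_axioms sets_P A]] by blast
    have "measure \<nu> A \<le> measure P (H0 \<union> H1)"
      using H0 H1 A by (intro roy_realization_measure_ge[OF R]) (auto dest: roy_consistent_mem_imp_U)
    also have "\<dots> \<le> measure P H0 + measure P H1"
      using H0 H1 by (intro measure_Un_le) auto
    finally show "measure \<nu> A
        \<le> measure (completion P) (U0 A \<times> {False}) + measure (completion P) (U1 A \<times> {True})"
      using H0(3) H1(3) by simp
  qed
qed

definition add_measure :: "'a measure \<Rightarrow> 'a measure \<Rightarrow> 'a measure" where
  "add_measure M N = measure_of (space M) (sets M) (\<lambda>A. emeasure M A + emeasure N A)"

lemma space_add_measure [simp]: "space (add_measure M N) = space M"
  and sets_add_measure [simp]: "sets (add_measure M N) = sets M"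
  by (simp_all add: add_measure_def)

lemma emeasure_add_measure:
  assumes "sets N = sets M"
  shows "emeasure (add_measure M N) A = emeasure M A + emeasure N A"
proof (cases "A \<in> sets M")
  case True
  have "countably_additive (sets M) (\<lambda>A. emeasure M A + emeasure N A)"
  proof (rule countably_additiveI)
    fix F :: "nat \<Rightarrow> 'a set"
    assume "range F \<subseteq> sets M" "disjoint_family F"
    then show "(\<Sum>i. emeasure M (F i) + emeasure N (F i)) = emeasure M (\<Union>i. F i) + emeasure N (\<Union>i. F i)"
      using assms by (simp add: suminf_add[symmetric] suminf_emeasure)
  qed
  then show ?thesis
    unfolding add_measure_def using True
    by (intro emeasure_measure_of_sigma sets.sigma_algebra_axioms) (auto simp: positive_def)
next
  case False
  then show ?thesis
    using assms by (simp add: emeasure_notin_sets)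
qed

definition off_diag :: "(real \<times> real) set" where
  "off_diag = {p. fst p \<noteq> snd p}"

definition roy_select :: "real \<times> real \<Rightarrow> real \<times> bool" where
  "roy_select p = (max (fst p) (snd p), fst p < snd p)"

lemma borel_measurable_fst_borel [measurable]:
  "fst \<in> borel_measurable (borel :: ('a::topological_space \<times> 'b::topological_space) measure)"
  by (intro borel_measurable_continuous_onI continuous_intros)

lemma borel_measurable_snd_borel [measurable]:
  "snd \<in> borel_measurable (borel :: ('a::topological_space \<times> 'b::topological_space) measure)"
  by (intro borel_measurable_continuous_onI continuous_intros)

lemma off_diag_borel [measurable]: "off_diag \<in> sets borel"
  unfolding off_diag_def by (intro borel_open open_Collect_neq continuous_intros)

lemma roy_select_measurable [measurable]:
  "roy_select \<in> measurable borel (borel \<Otimes>\<^sub>M count_space UNIV)"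
  unfolding roy_select_def by measurable

lemma max_vimage_borel:
  "B \<in> sets borel \<Longrightarrow> (\<lambda>p::real \<times> real. max (fst p) (snd p)) -` B \<in> sets borel"
  using measurable_sets_borel[of "\<lambda>p::real \<times> real. max (fst p) (snd p)" borel B]
  by (simp add: borel_measurable_continuous_onI continuous_intros)

lemma roy_select_vimage_cylinder: "roy_select -` (B \<times> UNIV) = (\<lambda>p. max (fst p) (snd p)) -` B"
  by (auto simp: roy_select_def)

lemma measure_bool_slices:
  assumes "finite_measure P" "sets P = sets (borel \<Otimes>\<^sub>M count_space UNIV)" "G \<in> sets P"
  shows "measure P G
    = measure P ({y. (y, False) \<in> G} \<times> {False}) + measure P ({y. (y, True) \<in> G} \<times> {True})"
proof -
  have slices: "{y. (y, d) \<in> G} \<times> {d} \<in> sets P" for d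
    using assms(2,3) sets_Pair2[of G] by (auto intro: pair_measureI)
  have "G = {y. (y, False) \<in> G} \<times> {False} \<union> {y. (y, True) \<in> G} \<times> {True}"
  proof (rule set_eqI)
    fix p
    show "p \<in> G \<longleftrightarrow> p \<in> {y. (y, False) \<in> G} \<times> {False} \<union> {y. (y, True) \<in> G} \<times> {True}"
      by (cases p, cases "snd p") auto
  qed
  also have "measure P \<dots>
      = measure P ({y. (y, False) \<in> G} \<times> {False}) + measure P ({y. (y, True) \<in> G} \<times> {True})"
    using slices by (intro finite_measure.finite_measure_Union[OF assms(1)]) auto
  finally show ?thesis .
qed

lemma sharp_bounds_off_diag_le:
  assumes "finite_measure P" and sets_P: "sets P = sets (borel \<Otimes>\<^sub>M count_space UNIV)"
    and "sharp_bounds P \<nu>" "G \<in> sets P"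
  shows "measure \<nu> (off_diag \<inter> roy_select -` G) \<le> measure P G"
proof -
  let ?A = "off_diag \<inter> roy_select -` G"
  have "?A \<in> sets borel"
    using \<open>G \<in> sets P\<close> by (simp add: sets_P)
  moreover have "U0 ?A = {y. (y, False) \<in> G}"
  proof (intro equalityI subsetI)
    fix y assume "y \<in> {y. (y, False) \<in> G}"
    then have "(y, y - 1) \<in> ?A" by (simp add: off_diag_def roy_select_def)
    then show "y \<in> U0 ?A" unfolding U0_def by (auto intro!: exI[of _ "y - 1"])
  qed (auto simp: U0_def off_diag_def roy_select_def max_def)
  moreover have "U1 ?A = {y. (y, True) \<in> G}"
  proof (intro equalityI subsetI)
    fix y assume "y \<in> {y. (y, True) \<in> G}"
    then have "(y - 1, y) \<in> ?A" by (simp add: off_diag_def roy_select_def)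
    then show "y \<in> U1 ?A" unfolding U1_def by (auto intro!: exI[of _ "y - 1"])
  qed (auto simp: U1_def off_diag_def roy_select_def max_def)
  moreover have "{y. (y, d) \<in> G} \<times> {d} \<in> sets P" for d
    using sets_Pair2[of G] \<open>G \<in> sets P\<close> by (simp add: sets_P)
  ultimately show ?thesis
    using assms(3) measure_bool_slices[OF assms(1,2,4)] unfolding sharp_bounds_def by fastforce
qed

lemma sharp_bounds_max_eq:
  assumes "finite_measure P" and sets_P: "sets P = sets (borel \<Otimes>\<^sub>M count_space UNIV)"
    and "sharp_bounds P \<nu>" "B \<in> sets borel"
  shows "measure \<nu> ((\<lambda>p. max (fst p) (snd p)) -` B) = measure P (B \<times> UNIV)"
proof -
  let ?A = "(\<lambda>p::real \<times> real. max (fst p) (snd p)) -` B"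
  have "?A \<in> sets borel"
    using \<open>B \<in> sets borel\<close> by (rule max_vimage_borel)
  moreover have "U0 ?A = B" "U1 ?A = B" "L0 ?A = B" "L1 ?A = B"
    by (auto simp: U0_def U1_def L0_def L1_def max_def)
  moreover have "B \<times> {d} \<in> sets P" for d
    using \<open>B \<in> sets borel\<close> by (simp add: sets_P)
  moreover have "B \<times> UNIV \<in> sets P"
    using \<open>B \<in> sets borel\<close> by (simp add: sets_P)
  ultimately show ?thesis
    using assms(3) measure_bool_slices[OF assms(1,2), of "B \<times> UNIV"]
    unfolding sharp_bounds_def by (fastforce intro: antisym)
qed

locale roy_bounds =
  fixes P :: "(real \<times> bool) measure" and \<nu> :: "(real \<times> real) measure"
  assumes prob_P: "prob_space P" and sets_P: "sets P = sets (borel \<Otimes>\<^sub>M count_space UNIV)"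
    and prob_\<nu>: "prob_space \<nu>" and sets_\<nu>: "sets \<nu> = sets borel"
    and bounds: "sharp_bounds P \<nu>"
begin

sublocale P: prob_space P by (rule prob_P)
sublocale \<nu>: prob_space \<nu> by (rule prob_\<nu>)

abbreviation outcome_space :: "((real \<times> bool) \<times> (real \<times> real)) measure" where
  "outcome_space \<equiv> (borel \<Otimes>\<^sub>M count_space UNIV) \<Otimes>\<^sub>M borel"

definition obs_law :: "(real \<times> bool) measure" where
  "obs_law = distr (restrict_space \<nu> off_diag) (borel \<Otimes>\<^sub>M count_space UNIV) roy_select"

definition residual :: "(real \<times> bool) measure" where
  "residual = diff_measure P obs_law"

text \<open>Potential outcomes with a strict preference are observed in the preferred sector; the
  observed mass that remains is put on the diagonal \<open>Y\<^sub>0 = Y\<^sub>1 = Y\<close>.\<close>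

definition coupling :: "((real \<times> bool) \<times> (real \<times> real)) measure" where
  "coupling = add_measure
     (distr (restrict_space \<nu> off_diag) outcome_space (\<lambda>p. (roy_select p, p)))
     (distr residual outcome_space (\<lambda>q. (q, (fst q, fst q))))"

lemma space_P: "space P = UNIV"
  using sets_eq_imp_space_eq[OF sets_P] by (simp add: space_pair_measure)

lemma off_diag_in_sets: "off_diag \<in> sets \<nu>"
  by (simp add: sets_\<nu>)

lemma emeasure_obs_law:
  assumes "G \<in> sets (borel \<Otimes>\<^sub>M count_space UNIV)"
  shows "emeasure obs_law G = emeasure \<nu> (off_diag \<inter> roy_select -` G)"
  unfolding obs_law_def
  by (rule emeasure_distr_restrict_space[OF off_diag_in_sets _ assms])
    (simp add: measurable_cong_sets[OF sets_\<nu> refl])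

lemma obs_law_le: "G \<in> sets P \<Longrightarrow> emeasure obs_law G \<le> emeasure P G"
  using sharp_bounds_off_diag_le[OF P.finite_measure_axioms sets_P bounds]
  by (simp add: emeasure_obs_law sets_P[symmetric] P.emeasure_eq_measure \<nu>.emeasure_eq_measure)

lemma finite_measure_obs_law: "finite_measure obs_law"
  unfolding obs_law_def
  by (intro finite_measure.finite_measure_distr finite_measure_restrict_space \<nu>.finite_measure_axioms
      off_diag_in_sets measurable_restrict_space1) (simp add: measurable_cong_sets[OF sets_\<nu> refl])

lemma emeasure_residual:
  assumes "G \<in> sets P"
  shows "emeasure residual G = emeasure P G - emeasure obs_law G"
  unfolding residual_def
  using finite_measure_obs_law obs_law_le assms
  by (intro emeasure_diff_measure P.finite_measure_axioms) (simp_all add: obs_law_def sets_P)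

lemma emeasure_residual_cylinder:
  assumes "B \<in> sets borel"
  shows "emeasure residual (B \<times> UNIV) = emeasure \<nu> ({p. fst p = snd p} \<inter> (\<lambda>p. max (fst p) (snd p)) -` B)"
proof -
  let ?M = "(\<lambda>p::real \<times> real. max (fst p) (snd p)) -` B"
  have M: "?M \<in> sets \<nu>"
    using max_vimage_borel[OF assms] by (simp add: sets_\<nu>)
  have diag: "{p :: real \<times> real. fst p = snd p} \<in> sets \<nu>"
    unfolding sets_\<nu> by (intro borel_closed closed_Collect_eq continuous_intros)
  have cyl: "B \<times> UNIV \<in> sets P"
    using assms by (simp add: sets_P)
  have "emeasure P (B \<times> UNIV) = emeasure \<nu> ?M"
    using sharp_bounds_max_eq[OF P.finite_measure_axioms sets_P bounds assms]
    by (simp add: P.emeasure_eq_measure \<nu>.emeasure_eq_measure)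
  also have "?M = off_diag \<inter> ?M \<union> {p. fst p = snd p} \<inter> ?M"
    by (auto simp: off_diag_def)
  also have "emeasure \<nu> \<dots> = emeasure \<nu> (off_diag \<inter> ?M) + emeasure \<nu> ({p. fst p = snd p} \<inter> ?M)"
    using M diag off_diag_in_sets by (intro plus_emeasure[symmetric]) (auto simp: off_diag_def)
  also have "emeasure \<nu> (off_diag \<inter> ?M) = emeasure obs_law (B \<times> UNIV)"
    using cyl by (simp add: emeasure_obs_law sets_P[symmetric] roy_select_vimage_cylinder)
  finally show ?thesis
    using cyl finite_measure.emeasure_finite[OF finite_measure_obs_law] by (simp add: emeasure_residual)
qed

lemma sets_coupling [measurable_cong]: "sets coupling = sets outcome_space"
  and space_coupling: "space coupling = UNIV"
  by (simp_all add: coupling_def space_pair_measure)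

lemma emeasure_coupling:
  assumes E: "E \<in> sets outcome_space"
  shows "emeasure coupling E
    = emeasure \<nu> (off_diag \<inter> (\<lambda>p. (roy_select p, p)) -` E) + emeasure residual ((\<lambda>q. (q, (fst q, fst q))) -` E)"
proof -
  have f: "(\<lambda>p. (roy_select p, p)) \<in> measurable \<nu> outcome_space"
    by (simp add: measurable_cong_sets[OF sets_\<nu> refl])
  have "sets residual = sets (borel \<Otimes>\<^sub>M count_space UNIV)"
    by (simp add: residual_def sets_P)
  then have g: "(\<lambda>q. (q, (fst q, fst q))) \<in> measurable residual outcome_space"
    unfolding measurable_cong_sets[OF _ refl] by measurable
  have "space residual = UNIV"
    by (simp add: residual_def space_P)
  then show ?thesis
    unfolding coupling_def
    by (simp add: emeasure_add_measure emeasure_distr_restrict_space[OF off_diag_in_sets f E]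
        emeasure_distr[OF g E])
qed

lemma distr_coupling_potential: "distr coupling borel snd = \<nu>"
proof (rule measure_eqI)
  fix A assume "A \<in> sets (distr coupling borel snd)"
  then have A: "A \<in> sets borel" by simp
  define DA where "DA = (\<lambda>y. (y, y)) -` A"
  have "(\<lambda>y::real. (y, y)) \<in> borel_measurable borel"
    by (intro borel_measurable_continuous_onI continuous_intros)
  from measurable_sets_borel[OF this A] have DA: "DA \<in> sets borel"
    by (simp add: DA_def)
  have vimages: "(\<lambda>p. (roy_select p, p)) -` snd -` A = A"
    "(\<lambda>q :: real \<times> bool. (q, (fst q, fst q))) -` snd -` A = DA \<times> UNIV"
    by (auto simp: DA_def)
  have snd: "snd \<in> measurable coupling borel"
    unfolding measurable_cong_sets[OF sets_coupling refl] by measurable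
  then have "emeasure (distr coupling borel snd) A = emeasure coupling (snd -` A)"
    using A by (simp add: emeasure_distr space_coupling)
  also have "\<dots> = emeasure \<nu> (off_diag \<inter> A) + emeasure residual (DA \<times> UNIV)"
    using emeasure_coupling[of "snd -` A"] measurable_sets[OF snd A]
    unfolding vimages space_coupling sets_coupling by simp
  also have "emeasure residual (DA \<times> UNIV) = emeasure \<nu> ({p. fst p = snd p} \<inter> A)"
    unfolding emeasure_residual_cylinder[OF DA] by (rule arg_cong[where f="emeasure \<nu>"]) (auto simp: DA_def)
  also have "emeasure \<nu> (off_diag \<inter> A) + \<dots> = emeasure \<nu> A"
  proof -
    have "{p :: real \<times> real. fst p = snd p} \<in> sets borel"
      by (intro borel_closed closed_Collect_eq continuous_intros)
    then show ?thesis
      using A by (subst plus_emeasure) (auto simp: sets_\<nu> off_diag_def intro!: arg_cong[where f="emeasure \<nu>"])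
  qed
  finally show "emeasure (distr coupling borel snd) A = emeasure \<nu> A" .
qed (simp add: sets_\<nu>)

lemma prob_space_coupling: "prob_space coupling"
  by (rule prob_space_distrD[of snd _ borel]) (simp_all add: distr_coupling_potential prob_\<nu>)

definition observed :: "(real \<times> bool) \<times> (real \<times> real) \<Rightarrow> real \<times> bool" where
  "observed \<omega> = (if snd (fst \<omega>) then snd (snd \<omega>) else fst (snd \<omega>), snd (fst \<omega>))"

lemma observed_roy_select: "observed (roy_select p, p) = roy_select p"
  by (cases "fst p < snd p") (auto simp: observed_def roy_select_def max_def)

lemma observed_diag: "observed (q, (fst q, fst q)) = q"
  by (cases q) (simp add: observed_def)

lemma observed_measurable: "observed \<in> measurable coupling (borel \<Otimes>\<^sub>M count_space UNIV)"
  unfolding observed_def by measurable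

lemma distr_coupling_observed: "distr coupling (borel \<Otimes>\<^sub>M count_space UNIV) observed = P"
proof (rule measure_eqI)
  fix G assume "G \<in> sets (distr coupling (borel \<Otimes>\<^sub>M count_space UNIV) observed)"
  then have G: "G \<in> sets (borel \<Otimes>\<^sub>M count_space UNIV)" by simp
  have "observed -` G \<in> sets outcome_space"
    using measurable_sets[OF observed_measurable G] by (simp add: space_coupling sets_coupling)
  moreover have "(\<lambda>p. (roy_select p, p)) -` observed -` G = roy_select -` G"
    by (simp add: observed_roy_select vimage_def)
  moreover have "(\<lambda>q. (q, (fst q, fst q))) -` observed -` G = G"
    by (simp add: observed_diag vimage_def)
  ultimately have "emeasure (distr coupling (borel \<Otimes>\<^sub>M count_space UNIV) observed) G
      = emeasure obs_law G + (emeasure P G - emeasure obs_law G)"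
    using G by (simp add: emeasure_distr[OF observed_measurable G] space_coupling emeasure_coupling
        emeasure_obs_law emeasure_residual sets_P)
  also have "\<dots> = emeasure P G"
    using G obs_law_le by (simp add: sets_P)
  finally show "emeasure (distr coupling (borel \<Otimes>\<^sub>M count_space UNIV) observed) G = emeasure P G" .
qed (simp add: sets_P)

lemma AE_coupling_selection:
  "AE \<omega> in coupling. (fst (snd \<omega>) < snd (snd \<omega>) \<longrightarrow> snd (fst \<omega>))
    \<and> (snd (snd \<omega>) < fst (snd \<omega>) \<longrightarrow> \<not> snd (fst \<omega>))"
proof (rule AE_I')
  let ?bad = "{\<omega> :: (real \<times> bool) \<times> (real \<times> real).
    (fst (snd \<omega>) < snd (snd \<omega>) \<and> \<not> snd (fst \<omega>)) \<or> (snd (snd \<omega>) < fst (snd \<omega>) \<and> snd (fst \<omega>))}"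
  have "{\<omega> \<in> space outcome_space. (fst (snd \<omega>) < snd (snd \<omega>) \<and> \<not> snd (fst \<omega>))
      \<or> (snd (snd \<omega>) < fst (snd \<omega>) \<and> snd (fst \<omega>))} \<in> sets outcome_space"
    by measurable
  then have "?bad \<in> sets outcome_space"
    by (simp add: space_pair_measure)
  moreover have "(\<lambda>p. (roy_select p, p)) -` ?bad = {}" "(\<lambda>q. (q, (fst q, fst q))) -` ?bad = {}"
    by (auto simp: roy_select_def)
  ultimately have "emeasure coupling ?bad = 0"
    using emeasure_coupling[of ?bad] by (simp only:) simp
  then show "?bad \<in> null_sets coupling"
    using \<open>?bad \<in> sets outcome_space\<close> by (simp add: null_sets_def sets_coupling)
qed auto

lemma exists_roy_realization:
  "\<exists>(M :: ((real \<times> bool) \<times> (real \<times> real)) measure) Yt Dt Y0 Y1. roy_realization M Yt Dt Y0 Y1 P \<nu>"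
proof (intro exI)
  have "(\<lambda>\<omega>. (fst (observed \<omega>), snd (fst \<omega>))) = observed"
    by (simp add: fun_eq_iff observed_def)
  moreover have "(\<lambda>\<omega>. (fst (snd \<omega>), snd (snd \<omega>))) = (snd :: _ \<Rightarrow> real \<times> real)"
    by simp
  ultimately show "roy_realization coupling (\<lambda>\<omega>. fst (observed \<omega>)) (\<lambda>\<omega>. snd (fst \<omega>))
      (\<lambda>\<omega>. fst (snd \<omega>)) (\<lambda>\<omega>. snd (snd \<omega>)) P \<nu>"
    unfolding roy_realization_def
    using prob_space_coupling distr_coupling_observed distr_coupling_potential AE_coupling_selection
    by (simp add: measurable_cong_sets[OF sets_coupling refl] observed_def)
qed

end

theorem theorem3:
  fixes P :: "(real \<times> bool) measure" and \<nu> :: "(real \<times> real) measure"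
  assumes "prob_space P" and "sets P = sets (borel \<Otimes>\<^sub>M count_space UNIV)"
    and "prob_space \<nu>" and "sets \<nu> = sets borel"
  shows "(sharp_bounds P \<nu> \<longrightarrow>
           (\<exists>(M :: ((real \<times> bool) \<times> (real \<times> real)) measure) Yt Dt Y0 Y1.
               roy_realization M Yt Dt Y0 Y1 P \<nu>))
       \<and> (\<forall>(M :: 'c measure) Yt Dt Y0 Y1.
               roy_realization M Yt Dt Y0 Y1 P \<nu> \<longrightarrow> sharp_bounds P \<nu>)"
proof (intro conjI impI allI)
  assume "sharp_bounds P \<nu>"
  with assms interpret roy_bounds P \<nu>
    by (simp add: roy_bounds_def)
  show "\<exists>(M :: ((real \<times> bool) \<times> (real \<times> real)) measure) Yt Dt Y0 Y1. roy_realization M Yt Dt Y0 Y1 P \<nu>"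
    by (rule exists_roy_realization)
next
  fix M :: "'c measure" and Yt Dt Y0 Y1
  assume "roy_realization M Yt Dt Y0 Y1 P \<nu>"
  then show "sharp_bounds P \<nu>"
    by (rule roy_realization_imp_sharp_bounds)
qed

end
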